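(* Assume $\|\hat F'(y)-\hat F'(x)\|_F\le L_{\hat F}\|y-x\|$ for all $x,y\in\mathcal F$, and that $\|\hat F'(x)\|\le M_{\hat F}$ for all $x\in\mathcal F$, for some $M_{\hat F}>0$. Let $\{x_k\}$ be computed by Scheme 1 with $$x_{k+1}=x_k-\eta_k\big(\hat F'(x_k)^*\hat F'(x_k)+\tau_kL_kI_n\big)^{-1}\hat F'(x_k)^*\hat F(x_k),$$ where $\tau_k>0$, $\eta_k>0$ and $\eta_k(2-\eta_k)\ge c>0$ for all $k\in\mathbb Z_+$. Then for $k\in\mathbb N$: $$\min_{i\in\{0,\dots,k-1\}}\|\nabla\hat f_2(x_i)\|^2\le\frac{8\big(2L_{\hat F}\max_{i\in\{0,\dots,k-1\}}\tau_i+M_{\hat F}^2\big)}{\eta(2-\eta)k}\sum_{i=0}^{k-1}\Big(\frac12\big(\tau_i-\hat f_1(x_i)\big)^2+\tau_i\big(\hat f_1(x_i)-\hat f_1(x_{i+1})\big)\Big),$$ where $\eta\in\operatorname{Argmin}_{k\in\mathbb Z_+}\{\eta_k(2-\eta_k)\}$.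
   Context: Let $F:\mathbb R^n\to\mathbb R^m$ be smooth, $\hat F=\frac1{\sqrt m}F$ with Jacobian $\hat F'(x)$ and its transpose $\hat F'(x)^*$; Euclidean norms, spectral norm for matrices, $\|\cdot\|_F$ Frobenius norm. $\hat f_1(x)=\|\hat F(x)\|$, $\hat f_2=\hat f_1^2$, $\psi_{x,L,\tau}(y)=\frac\tau2+\frac{\|\hat F(x)+\hat F'(x)(y-x)\|^2}{2\tau}+\frac L2\|y-x\|^2$. $\mathcal F$ closed convex with nonempty interior, $\mathcal L(\hat f_1(x_0))\subseteq\mathcal F$ and the generated sequence stays in $\mathcal F$. Scheme 1 (with the displayed update): input $x_0$, $L\in(0,L_{\hat F}]$, $L_0=L$; at iteration $k$ choose $\tau_k$, compute $x_{k+1}$; if $\hat f_1(x_{k+1})>\psi_{x_k,L_k,\tau_k}(x_{k+1})$, set $L_k:=\min\{2L_k,2L_{\hat F}\}$ and recompute; otherwise $L_{k+1}=\max\{L_k/2,L\}$. *)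

theory Defs
  imports "HOL-Analysis.Analysis"
begin

definition Fhat :: "(real^'n \<Rightarrow> real^'m) \<Rightarrow> real^'n \<Rightarrow> real^'m" where
  "Fhat F x = (1 / sqrt (real CARD('m))) *\<^sub>R F x"

definition Jhat :: "(real^'n \<Rightarrow> real^'n^'m) \<Rightarrow> real^'n \<Rightarrow> real^'n^'m" where
  "Jhat J x = (1 / sqrt (real CARD('m))) *\<^sub>R J x"

definition frob_norm :: "real^'n^'m \<Rightarrow> real" where
  "frob_norm A = sqrt (\<Sum>i\<in>UNIV. \<Sum>j\<in>UNIV. (A $ i $ j)^2)"

definition spec_norm :: "real^'n^'m \<Rightarrow> real" where
  "spec_norm A = onorm (\<lambda>v. A *v v)"

definition grad :: "(real^'n \<Rightarrow> real) \<Rightarrow> real^'n \<Rightarrow> real^'n" where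
  "grad f x = (THE g. (f has_derivative (\<lambda>h. g \<bullet> h)) (at x))"

definition f1 :: "(real^'n \<Rightarrow> real^'m) \<Rightarrow> real^'n \<Rightarrow> real" where
  "f1 F x = norm (Fhat F x)"

definition f2 :: "(real^'n \<Rightarrow> real^'m) \<Rightarrow> real^'n \<Rightarrow> real" where
  "f2 F x = (f1 F x)^2"

definition psi :: "(real^'n \<Rightarrow> real^'m) \<Rightarrow> (real^'n \<Rightarrow> real^'n^'m)
    \<Rightarrow> real^'n \<Rightarrow> real \<Rightarrow> real \<Rightarrow> real^'n \<Rightarrow> real" where
  "psi F J x L \<tau> y = \<tau> / 2 + (norm (Fhat F x + Jhat J x *v (y - x)))^2 / (2 * \<tau>)
      + L / 2 * (norm (y - x))^2"

definition upd :: "(real^'n \<Rightarrow> real^'m) \<Rightarrow> (real^'n \<Rightarrow> real^'n^'m)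
    \<Rightarrow> real^'n \<Rightarrow> real \<Rightarrow> real \<Rightarrow> real \<Rightarrow> real^'n" where
  "upd F J x L \<tau> \<eta> = x - \<eta> *\<^sub>R
     (matrix_inv (transpose (Jhat J x) ** Jhat J x + (\<tau> * L) *\<^sub>R mat 1)
        *v (transpose (Jhat J x) *v Fhat F x))"

text \<open>j-th trial value of L_k in the backtracking loop, starting from L0:
  each rejection sets L := min (2 L) (2 LF).\<close>
definition trialL :: "real \<Rightarrow> real \<Rightarrow> nat \<Rightarrow> real" where
  "trialL LF L0 j = ((\<lambda>t. min (2 * t) (2 * LF)) ^^ j) L0"

text \<open>A run of Scheme 1 with input x 0, L, constant LF; tau k, eta k the chosen
  parameters and Lk k the finally accepted value of L_k at iteration k.\<close>
definition scheme1 :: "(real^'n \<Rightarrow> real^'m) \<Rightarrow> (real^'n \<Rightarrow> real^'n^'m) \<Rightarrow> real \<Rightarrow> real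
    \<Rightarrow> (nat \<Rightarrow> real^'n) \<Rightarrow> (nat \<Rightarrow> real) \<Rightarrow> (nat \<Rightarrow> real) \<Rightarrow> (nat \<Rightarrow> real) \<Rightarrow> bool" where
  "scheme1 F J LF L x tau eta Lk \<longleftrightarrow>
     (\<forall>k. \<exists>j.
        (let L0 = (if k = 0 then L else max (Lk (k - 1) / 2) L) in
          Lk k = trialL LF L0 j \<and>
          (\<forall>i<j. f1 F (upd F J (x k) (trialL LF L0 i) (tau k) (eta k))
                 > psi F J (x k) (trialL LF L0 i) (tau k)
                     (upd F J (x k) (trialL LF L0 i) (tau k) (eta k)))) \<and>
        x (Suc k) = upd F J (x k) (Lk k) (tau k) (eta k) \<and>
        f1 F (x (Suc k)) \<le> psi F J (x k) (Lk k) (tau k) (x (Suc k)))"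

end

theory Submission
  imports Defs
begin

text \<open>Write A and r for the scaled Jacobian and residual at x_k and t = tau_k L_k. The step is
  x_{k+1} = x_k - eta_k u along the Levenberg-Marquardt direction u, (A^T A + t I) u = g := A^T r,
  and grad f2 (x_k) = 2 g. Expanding the model gives
  psi(x_{k+1}) = tau_k/2 + (|r|^2 - eta_k (2 - eta_k) g.u) / (2 tau_k), so the acceptance test
  bounds eta_k (2 - eta_k) g.u by twice the k-th summand on the right. As the spectrum of
  A^T A + t I lies in [t, M^2 + t], |g|^2 <= (M^2 + t) g.u, and t <= 2 L_F max tau_i because
  backtracking caps L_k at 2 L_F. The minimum is then at most the mean of these bounds.\<close>

definition regularized_gram :: "real^'n^'m \<Rightarrow> real \<Rightarrow> real^'n^'n" where
  "regularized_gram A t = transpose A ** A + t *\<^sub>R mat 1"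

definition lm_direction :: "real^'n^'m \<Rightarrow> real^'m \<Rightarrow> real \<Rightarrow> real^'n" where
  "lm_direction A r t = matrix_inv (regularized_gram A t) *v (transpose A *v r)"

lemma upd_eq_lm_direction:
  "upd F J x L \<tau> \<eta> = x - \<eta> *\<^sub>R lm_direction (Jhat J x) (Fhat F x) (\<tau> * L)"
  by (simp add: upd_def lm_direction_def regularized_gram_def)

lemma norm_matrix_vector_le_spec_norm: "norm (A *v v) \<le> spec_norm A * norm v"
  unfolding spec_norm_def by (rule onorm[OF matrix_vector_mul_bounded_linear])

lemma spec_norm_nonneg: "0 \<le> spec_norm A"
  unfolding spec_norm_def by (rule onorm_pos_le[OF matrix_vector_mul_bounded_linear])

lemma norm_transpose_vector_le_spec_norm:
  fixes A :: "real^'n^'m"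
  shows "norm (transpose A *v w) \<le> spec_norm A * norm w"
proof -
  define z where "z = transpose A *v w"
  have "norm z * norm z = w \<bullet> (A *v z)"
    using dot_lmul_matrix[of w A z] by (simp add: z_def flip: dot_square_norm power2_eq_square)
  also have "\<dots> \<le> norm w * norm (A *v z)"
    by (rule norm_cauchy_schwarz)
  also have "\<dots> \<le> norm w * (spec_norm A * norm z)"
    by (rule mult_left_mono[OF norm_matrix_vector_le_spec_norm norm_ge_zero])
  finally have "norm z * norm z \<le> (spec_norm A * norm w) * norm z"
    by (simp add: algebra_simps)
  then show ?thesis
    using spec_norm_nonneg[of A] unfolding z_def[symmetric]
    by (cases "norm z = 0") (auto simp: mult_le_cancel_right)
qed

lemma power2_norm_add:
  fixes x y :: "'a::real_inner"
  shows "(norm (x + y))\<^sup>2 = (norm x)\<^sup>2 + 2 * (x \<bullet> y) + (norm y)\<^sup>2"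
  by (simp add: dot_norm field_simps)

lemma regularized_gram_mult_vector:
  "regularized_gram A t *v v = transpose A *v (A *v v) + t *\<^sub>R v"
  by (simp add: regularized_gram_def matrix_vector_mult_add_rdistrib matrix_vector_mul_assoc
      flip: scaleR_matrix_vector_assoc)

lemma inner_regularized_gram:
  "(regularized_gram A t *v v) \<bullet> v = (norm (A *v v))\<^sup>2 + t * (norm v)\<^sup>2"
  by (simp add: regularized_gram_mult_vector inner_add_left dot_lmul_matrix
      power2_norm_eq_inner)

lemma invertible_regularized_gram:
  assumes "0 < t"
  shows "invertible (regularized_gram A t)"
proof -
  have "v = 0" if "regularized_gram A t *v v = 0" for v
  proof -
    have "(norm (A *v v))\<^sup>2 + t * (norm v)\<^sup>2 = 0"
      using inner_regularized_gram[of A t v] that by simp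
    then have "t * (norm v)\<^sup>2 = 0"
      using assms by (simp add: add_nonneg_eq_0_iff)
    then show "v = 0"
      using assms by simp
  qed
  then show ?thesis
    by (simp add: invertible_left_inverse matrix_left_invertible_ker)
qed

lemma matrix_mul_matrix_inv:
  assumes "invertible A"
  shows "A ** matrix_inv A = mat 1"
  using assms unfolding invertible_def matrix_inv_def by (rule someI_ex[THEN conjunct1])

lemma regularized_gram_lm_direction:
  assumes "0 < t"
  shows "regularized_gram A t *v lm_direction A r t = transpose A *v r"
  by (simp add: lm_direction_def matrix_vector_mul_assoc
      matrix_mul_matrix_inv[OF invertible_regularized_gram[OF assms]])

lemma inner_lm_direction:
  assumes "0 < t"
  shows "(transpose A *v r) \<bullet> lm_direction A r t
    = (norm (A *v lm_direction A r t))\<^sup>2 + t * (norm (lm_direction A r t))\<^sup>2"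
  using inner_regularized_gram[of A t "lm_direction A r t"]
  by (simp add: regularized_gram_lm_direction[OF assms])

lemma inner_lm_direction_nonneg:
  assumes "0 < t"
  shows "0 \<le> (transpose A *v r) \<bullet> lm_direction A r t"
  unfolding inner_lm_direction[OF assms] using assms by simp

lemma norm_transpose_le_inner_lm_direction:
  assumes "0 < t"
  shows "(norm (transpose A *v r))\<^sup>2
    \<le> ((spec_norm A)\<^sup>2 + t) * ((transpose A *v r) \<bullet> lm_direction A r t)"
proof -
  define u where "u = lm_direction A r t"
  define p where "p = transpose A *v (A *v u)"
  define s where "s = spec_norm A"
  have pu: "p \<bullet> u = (norm (A *v u))\<^sup>2"
    by (simp add: p_def dot_lmul_matrix power2_norm_eq_inner)
  have p_le: "(norm p)\<^sup>2 \<le> s\<^sup>2 * (norm (A *v u))\<^sup>2"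
    using norm_transpose_vector_le_spec_norm[of A "A *v u"]
    by (simp add: p_def s_def power_mult_distrib[symmetric] power_mono)
  have Au_le: "(norm (A *v u))\<^sup>2 \<le> s\<^sup>2 * (norm u)\<^sup>2"
    using norm_matrix_vector_le_spec_norm[of A u]
    by (simp add: s_def power_mult_distrib[symmetric] power_mono)
  have "(norm (transpose A *v r))\<^sup>2 = (norm (p + t *\<^sub>R u))\<^sup>2"
    using regularized_gram_lm_direction[OF assms, of A r]
    by (simp add: regularized_gram_mult_vector p_def u_def)
  also have "\<dots> = (norm p)\<^sup>2 + 2 * t * (norm (A *v u))\<^sup>2 + t\<^sup>2 * (norm u)\<^sup>2"
    by (simp add: power2_norm_add pu power_mult_distrib)
  also have "\<dots> \<le> (s\<^sup>2 + t) * ((norm (A *v u))\<^sup>2 + t * (norm u)\<^sup>2)"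
    using p_le mult_left_mono[OF Au_le less_imp_le[OF assms]]
    by (simp add: algebra_simps power2_eq_square[of t])
  finally show ?thesis
    by (simp only: inner_lm_direction[OF assms] s_def u_def)
qed

lemma norm_lm_model:
  assumes "0 < t"
  shows "(norm (r - \<eta> *\<^sub>R (A *v lm_direction A r t)))\<^sup>2
      + t * (norm (\<eta> *\<^sub>R lm_direction A r t))\<^sup>2
    = (norm r)\<^sup>2 - \<eta> * (2 - \<eta>) * ((transpose A *v r) \<bullet> lm_direction A r t)"
proof -
  define u where "u = lm_direction A r t"
  define g where "g = transpose A *v r"
  have ru: "r \<bullet> (A *v u) = g \<bullet> u"
    by (simp add: g_def dot_lmul_matrix)
  have gu: "g \<bullet> u = (norm (A *v u))\<^sup>2 + t * (norm u)\<^sup>2"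
    unfolding g_def u_def by (rule inner_lm_direction[OF assms])
  have "(norm (r - \<eta> *\<^sub>R (A *v u)))\<^sup>2
      = (norm r)\<^sup>2 - 2 * \<eta> * (g \<bullet> u) + \<eta>\<^sup>2 * (norm (A *v u))\<^sup>2"
    using power2_norm_add[of r "- (\<eta> *\<^sub>R (A *v u))"] by (simp add: ru power_mult_distrib)
  then show ?thesis
    unfolding u_def[symmetric] g_def[symmetric] gu
    by (simp add: power_mult_distrib power2_eq_square algebra_simps)
qed

lemma grad_eqI:
  assumes "(f has_derivative (\<lambda>h. g \<bullet> h)) (at x)"
  shows "grad f x = g"
  unfolding grad_def
proof (rule the_equality)
  fix g' assume "(f has_derivative (\<lambda>h. g' \<bullet> h)) (at x)"
  then have "(\<lambda>h. g' \<bullet> h) = (\<lambda>h. g \<bullet> h)"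
    using assms by (rule has_derivative_unique)
  then have "g' \<bullet> (g' - g) = g \<bullet> (g' - g)"
    by meson
  then have "(g' - g) \<bullet> (g' - g) = 0"
    by (simp add: inner_diff_left)
  then show "g' = g"
    by simp
qed (rule assms)

lemma grad_f2:
  fixes F :: "real^'n \<Rightarrow> real^'m" and J :: "real^'n \<Rightarrow> real^'n^'m"
  assumes deriv: "\<And>y. (F has_derivative (\<lambda>h. J y *v h)) (at y)"
  shows "grad (f2 F) x = 2 *\<^sub>R (transpose (Jhat J x) *v Fhat F x)"
proof (rule grad_eqI)
  have "Fhat F = (\<lambda>y. (1 / sqrt (real CARD('m))) *\<^sub>R F y)"
    by (simp add: Fhat_def fun_eq_iff)
  then have dF: "(Fhat F has_derivative (\<lambda>h. Jhat J x *v h)) (at x)"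
    using has_derivative_scaleR_right[OF deriv[of x], of "1 / sqrt (real CARD('m))"]
    by (simp add: Jhat_def scaleR_matrix_vector_assoc)
  have "f2 F = (\<lambda>y. Fhat F y \<bullet> Fhat F y)"
    by (simp add: fun_eq_iff f2_def f1_def power2_norm_eq_inner)
  then have "(f2 F has_derivative
      (\<lambda>h. Fhat F x \<bullet> (Jhat J x *v h) + (Jhat J x *v h) \<bullet> Fhat F x)) (at x)"
    using has_derivative_inner[OF dF dF] by simp
  then show "(f2 F has_derivative (\<lambda>h. (2 *\<^sub>R (transpose (Jhat J x) *v Fhat F x)) \<bullet> h)) (at x)"
    by (simp add: dot_lmul_matrix inner_commute[of "Jhat J x *v _"])
qed

lemma accepted_step_gradient_bound:
  fixes F :: "real^'n \<Rightarrow> real^'m" and J :: "real^'n \<Rightarrow> real^'n^'m"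
  assumes deriv: "\<And>y. (F has_derivative (\<lambda>h. J y *v h)) (at y)"
    and "0 < \<tau>" "0 < Lc" and M: "spec_norm (Jhat J x) \<le> M" and T: "\<tau> * Lc \<le> T"
    and e: "0 < e" "e \<le> \<eta> * (2 - \<eta>)"
    and accept: "f1 F (upd F J x Lc \<tau> \<eta>) \<le> psi F J x Lc \<tau> (upd F J x Lc \<tau> \<eta>)"
  shows "(norm (grad (f2 F) x))\<^sup>2 \<le> 8 * (M\<^sup>2 + T) / e
    * ((1/2) * (\<tau> - f1 F x)\<^sup>2 + \<tau> * (f1 F x - f1 F (upd F J x Lc \<tau> \<eta>)))"
proof -
  define A r t where "A = Jhat J x" and "r = Fhat F x" and "t = \<tau> * Lc"
  define g u where "g = transpose A *v r" and "u = lm_direction A r t"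
  define y where "y = upd F J x Lc \<tau> \<eta>"
  define S where "S = (1/2) * (\<tau> - f1 F x)\<^sup>2 + \<tau> * (f1 F x - f1 F y)"
  have t: "0 < t"
    using assms by (simp add: t_def)
  have gu: "0 \<le> g \<bullet> u"
    unfolding g_def u_def by (rule inner_lm_direction_nonneg[OF t])
  have "psi F J x Lc \<tau> y
      = \<tau> / 2 + ((norm (r - \<eta> *\<^sub>R (A *v u)))\<^sup>2 + t * (norm (\<eta> *\<^sub>R u))\<^sup>2) / (2 * \<tau>)"
    using \<open>0 < \<tau>\<close>
    by (simp add: psi_def y_def upd_eq_lm_direction A_def r_def t_def u_def field_simps
        vec.neg matrix_vector_mult_scaleR)
  also have "\<dots> = \<tau> / 2 + ((f1 F x)\<^sup>2 - \<eta> * (2 - \<eta>) * (g \<bullet> u)) / (2 * \<tau>)"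
    unfolding u_def norm_lm_model[OF t] by (simp add: f1_def g_def r_def)
  finally have model:
      "2 * (\<tau> * psi F J x Lc \<tau> y) = \<tau>\<^sup>2 + (f1 F x)\<^sup>2 - \<eta> * (2 - \<eta>) * (g \<bullet> u)"
    using \<open>0 < \<tau>\<close> by (simp add: field_simps power2_eq_square)
  have "\<tau> * f1 F y \<le> \<tau> * psi F J x Lc \<tau> y"
    using accept \<open>0 < \<tau>\<close> by (simp add: y_def)
  moreover have "2 * S = \<tau>\<^sup>2 + (f1 F x)\<^sup>2 - 2 * (\<tau> * f1 F y)"
    by (simp add: S_def power2_diff algebra_simps)
  moreover have "e * (g \<bullet> u) \<le> \<eta> * (2 - \<eta>) * (g \<bullet> u)"
    using e(2) gu by (rule mult_right_mono)
  ultimately have "e * (g \<bullet> u) \<le> 2 * S"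
    using model by linarith
  then have decrease: "g \<bullet> u \<le> 2 * S / e"
    using e(1) by (simp add: pos_le_divide_eq mult.commute)
  have "(spec_norm A)\<^sup>2 \<le> M\<^sup>2"
    using M spec_norm_nonneg[of A] by (simp add: A_def power_mono)
  then have MT: "(spec_norm A)\<^sup>2 + t \<le> M\<^sup>2 + T"
    using T by (simp add: t_def)
  then have MT_nonneg: "0 \<le> M\<^sup>2 + T"
    using t zero_le_power2[of "spec_norm A"] by linarith
  have "(norm (grad (f2 F) x))\<^sup>2 = 4 * (norm g)\<^sup>2"
    by (simp add: grad_f2[OF deriv] g_def A_def r_def power_mult_distrib)
  also have "\<dots> \<le> 4 * (((spec_norm A)\<^sup>2 + t) * (g \<bullet> u))"
    unfolding g_def u_def using norm_transpose_le_inner_lm_direction[OF t] by simp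
  also have "\<dots> \<le> 4 * ((M\<^sup>2 + T) * (g \<bullet> u))"
    using mult_right_mono[OF MT gu] by simp
  also have "\<dots> \<le> 4 * ((M\<^sup>2 + T) * (2 * S / e))"
    using mult_left_mono[OF decrease MT_nonneg] by simp
  also have "\<dots> = 8 * (M\<^sup>2 + T) / e * S"
    by simp
  finally show ?thesis
    unfolding S_def y_def .
qed

lemma trialL_bounds:
  assumes "0 \<le> L" "L \<le> L0" "L0 \<le> 2 * LF" "L \<le> LF"
  shows "L \<le> trialL LF L0 j \<and> trialL LF L0 j \<le> 2 * LF"
  using assms by (induction j) (auto simp: trialL_def min_def)

lemma scheme1_Lk_bounds:
  assumes scheme: "scheme1 F J LF L x tau eta Lk" and "0 \<le> L" "L \<le> LF"
  shows "L \<le> Lk k \<and> Lk k \<le> 2 * LF"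
proof (induction k)
  case 0
  obtain j where "Lk 0 = trialL LF L j"
    using scheme[unfolded scheme1_def, rule_format, of 0] by (auto simp: Let_def)
  then show ?case
    using trialL_bounds[of L L LF j] assms(2,3) by simp
next
  case (Suc k)
  obtain j where "Lk (Suc k) = trialL LF (max (Lk k / 2) L) j"
    using scheme[unfolded scheme1_def, rule_format, of "Suc k"] by (auto simp: Let_def)
  then show ?case
    using trialL_bounds[of L "max (Lk k / 2) L" LF j] assms(2,3) Suc by auto
qed

lemma scheme1_accepted:
  assumes "scheme1 F J LF L x tau eta Lk"
  shows "x (Suc k) = upd F J (x k) (Lk k) (tau k) (eta k)"
    and "f1 F (x (Suc k)) \<le> psi F J (x k) (Lk k) (tau k) (x (Suc k))"
  using assms unfolding scheme1_def by blast+

lemma scheme1_gradient_bound: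
  fixes F :: "real^'n \<Rightarrow> real^'m" and J :: "real^'n \<Rightarrow> real^'n^'m"
  assumes deriv: "\<And>y. (F has_derivative (\<lambda>h. J y *v h)) (at y)"
    and scheme: "scheme1 F J LF L x tau eta Lk" and L: "0 < L" "L \<le> LF"
    and tau: "0 < tau i" "tau i \<le> tau_max" and M: "spec_norm (Jhat J (x i)) \<le> M"
    and e: "0 < e" "e \<le> eta i * (2 - eta i)"
  shows "(norm (grad (f2 F) (x i)))\<^sup>2 \<le> 8 * (M\<^sup>2 + 2 * LF * tau_max) / e
    * ((1/2) * (tau i - f1 F (x i))\<^sup>2 + tau i * (f1 F (x i) - f1 F (x (Suc i))))"
proof -
  have Lk: "0 < Lk i" "Lk i \<le> 2 * LF"
    using scheme1_Lk_bounds[OF scheme, of i] L by auto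
  then have "tau i * Lk i \<le> tau_max * (2 * LF)"
    using tau by (intro mult_mono) auto
  then have "tau i * Lk i \<le> 2 * LF * tau_max"
    by (simp add: mult_ac)
  moreover have "f1 F (upd F J (x i) (Lk i) (tau i) (eta i))
      \<le> psi F J (x i) (Lk i) (tau i) (upd F J (x i) (Lk i) (tau i) (eta i))"
    using scheme1_accepted[OF scheme, of i] by simp
  ultimately show ?thesis
    unfolding scheme1_accepted(1)[OF scheme]
    using accepted_step_gradient_bound[OF deriv tau(1) Lk(1) M _ e] by blast
qed

lemma Min_image_le_mean:
  fixes f :: "'a \<Rightarrow> real"
  assumes "finite A" "A \<noteq> {}"
  shows "Min (f ` A) \<le> sum f A / card A"
proof -
  have "card A * Min (f ` A) = (\<Sum>i\<in>A. Min (f ` A))"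
    by simp
  also have "\<dots> \<le> sum f A"
    using assms by (intro sum_mono Min_le) auto
  finally show ?thesis
    using assms by (simp add: field_simps card_gt_0_iff)
qed

theorem theorem6:
  fixes F :: "real^'n \<Rightarrow> real^'m"
    and J :: "real^'n \<Rightarrow> real^'n^'m"
    and \<F> :: "(real^'n) set"
    and LF L M c \<eta> :: real
    and x :: "nat \<Rightarrow> real^'n"
    and tau eta Lk :: "nat \<Rightarrow> real"
    and k :: nat
  assumes deriv: "\<And>y. (F has_derivative (\<lambda>h. J y *v h)) (at y)"
    and Jcont: "continuous_on UNIV J"
    and Fclosed: "closed \<F>" and Fconvex: "convex \<F>" and Fint: "interior \<F> \<noteq> {}"
    and level: "{y. f1 F y \<le> f1 F (x 0)} \<subseteq> \<F>"
    and inF: "\<And>i. x i \<in> \<F>"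
    and lip: "\<And>y z. y \<in> \<F> \<Longrightarrow> z \<in> \<F> \<Longrightarrow> frob_norm (Jhat J y - Jhat J z) \<le> LF * norm (y - z)"
    and Mpos: "M > 0"
    and bnd: "\<And>y. y \<in> \<F> \<Longrightarrow> spec_norm (Jhat J y) \<le> M"
    and Lpos: "0 < L" and LleLF: "L \<le> LF"
    and taupos: "\<And>i. tau i > 0"
    and etapos: "\<And>i. eta i > 0"
    and cpos: "c > 0"
    and etac: "\<And>i. eta i * (2 - eta i) \<ge> c"
    and scheme: "scheme1 F J LF L x tau eta Lk"
    and argmin: "\<exists>j. \<eta> = eta j \<and> (\<forall>i. eta j * (2 - eta j) \<le> eta i * (2 - eta i))"
    and kpos: "k \<ge> 1"
  shows "Min ((\<lambda>i. (norm (grad (f2 F) (x i)))^2) ` {..<k})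
         \<le> 8 * (2 * LF * Max (tau ` {..<k}) + M^2) / (\<eta> * (2 - \<eta>) * real k)
           * (\<Sum>i<k. (1/2) * (tau i - f1 F (x i))^2 + tau i * (f1 F (x i) - f1 F (x (Suc i))))"
proof -
  define e where "e = \<eta> * (2 - \<eta>)"
  define S where "S i = (1/2) * (tau i - f1 F (x i))\<^sup>2 + tau i * (f1 F (x i) - f1 F (x (Suc i)))"
    for i
  have e_le: "e \<le> eta i * (2 - eta i)" for i
    using argmin by (auto simp: e_def)
  have e_pos: "0 < e"
    using argmin etac cpos unfolding e_def by (metis order_less_le_trans)
  have "(norm (grad (f2 F) (x i)))\<^sup>2 \<le> 8 * (M\<^sup>2 + 2 * LF * Max (tau ` {..<k})) / e * S i"
    if "i < k" for i
    unfolding S_def using that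
    by (intro scheme1_gradient_bound[OF deriv scheme Lpos LleLF taupos _ bnd[OF inF] e_pos e_le]
        Max_ge) auto
  then have "(\<Sum>i<k. (norm (grad (f2 F) (x i)))\<^sup>2) / k
      \<le> (\<Sum>i<k. 8 * (M\<^sup>2 + 2 * LF * Max (tau ` {..<k})) / e * S i) / k"
    by (intro divide_right_mono sum_mono) auto
  moreover have "Min ((\<lambda>i. (norm (grad (f2 F) (x i)))\<^sup>2) ` {..<k})
      \<le> (\<Sum>i<k. (norm (grad (f2 F) (x i)))\<^sup>2) / k"
    using Min_image_le_mean[of "{..<k}"] kpos by (simp add: lessThan_empty_iff)
  ultimately show ?thesis
    unfolding S_def[symmetric] sum_distrib_left[symmetric] by (simp add: e_def add.commute)
qed

end
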